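(* Let $(G,\omega,\mu)$ be an infinite, connected, locally finite weighted graph, let $V:G\to\mathbb{R}$, and let $u:G\to\mathbb{R}$ be a solution of $\Delta u - Vu=0$ in $G$. Let $\eta,\xi:G\to\mathbb{R}$ satisfy: $\eta\ge0$ with finite support, and $$[\eta^2(y)-\eta^2(x)]\,[e^{\xi(y)}-e^{\xi(x)}]\ge0\quad\text{for all }x,y\in G\text{ with }x\sim y.$$ Then for any $p\ge2$, $$\frac12\sum_{x\in G}|u(x)|^p\eta^2(x)e^{\xi(x)}\Big\{V(x)\,p\,\mu(x)-\frac12\sum_{y\in G}\omega(x,y)\big[1-e^{\xi(y)-\xi(x)}\big]^2\Big\}\le\sum_{x,y\in G}|u(x)|^p e^{\xi(y)}[\eta(y)-\eta(x)]^2\omega(x,y).$$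
   Context: A weighted graph $(G,\omega,\mu)$: $G$ countable, $\mu:G\to(0,\infty)$, $\omega:G\times G\to[0,\infty)$ symmetric with $\omega(x,x)=0$ and $\sum_y\omega(x,y)<\infty$; $x\sim y$ iff $\omega(x,y)>0$; locally finite means each vertex has finitely many neighbours; connected means any two vertices are joined by a finite path. Laplacian $\Delta f(x)=\frac{1}{\mu(x)}\sum_{y}[f(y)-f(x)]\omega(x,y)$. *)

theory Defs
  imports "HOL-Analysis.Analysis"
begin

definition weighted_graph :: "('a::countable \<Rightarrow> 'a \<Rightarrow> real) \<Rightarrow> ('a \<Rightarrow> real) \<Rightarrow> bool" where
  "weighted_graph \<omega> \<mu> \<longleftrightarrow>
     (\<forall>x. \<mu> x > 0) \<and> (\<forall>x y. \<omega> x y \<ge> 0) \<and> (\<forall>x y. \<omega> x y = \<omega> y x) \<and>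
     (\<forall>x. \<omega> x x = 0) \<and> (\<forall>x. (\<lambda>y. \<omega> x y) summable_on UNIV)"

definition adjacent :: "('a \<Rightarrow> 'a \<Rightarrow> real) \<Rightarrow> 'a \<Rightarrow> 'a \<Rightarrow> bool" where
  "adjacent \<omega> x y \<longleftrightarrow> \<omega> x y > 0"

definition locally_finite_graph :: "('a \<Rightarrow> 'a \<Rightarrow> real) \<Rightarrow> bool" where
  "locally_finite_graph \<omega> \<longleftrightarrow> (\<forall>x. finite {y. adjacent \<omega> x y})"

definition connected_graph :: "('a \<Rightarrow> 'a \<Rightarrow> real) \<Rightarrow> bool" where
  "connected_graph \<omega> \<longleftrightarrow> (\<forall>x y. (adjacent \<omega>)\<^sup>*\<^sup>* x y)"

definition graph_laplacian :: "('a \<Rightarrow> 'a \<Rightarrow> real) \<Rightarrow> ('a \<Rightarrow> real) \<Rightarrow> ('a \<Rightarrow> real) \<Rightarrow> 'a \<Rightarrow> real" where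
  "graph_laplacian \<omega> \<mu> f x = (1 / \<mu> x) * (\<Sum>\<^sub>\<infinity>y. (f y - f x) * \<omega> x y)"

end

theory Submission
  imports Defs
begin

text \<open>Since \<open>\<eta>\<close> has finite support and the graph is locally finite, every sum is a finite
sum over the closed neighbourhood of the support of \<open>\<eta>\<close>. Multiplying \<open>\<Delta>u = V u\<close> by
\<open>|u|^(p-2) u \<eta>\<^sup>2 e^\<xi>\<close> and summing turns the potential term into a sum over edges, so the claim
becomes the nonnegativity of a double sum over ordered edges. After symmetrisation it suffices
that each unordered edge contributes a nonnegative amount. Convexity of \<open>r \<mapsto> r^(p/2)\<close>
bounds the terms involving \<open>|u|^(p-2) u\<close> from below by terms in \<open>|u(x)|^(p/2)\<close> and
\<open>|u(y)|^(p/2)\<close>, and what remains is a quadratic form in these two numbers with nonpositive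
discriminant. This edgewise bound holds for arbitrary real \<open>\<eta>\<close> and \<open>\<xi>\<close>.\<close>

lemma powr_above_tangent:
  fixes k c x :: real
  assumes "k \<ge> 1" "c > 0" "x \<ge> 0"
  shows "k * c powr (k - 1) * (x - c) \<le> x powr k - c powr k"
proof (cases "x = 0")
  case True
  have "c powr k = c powr (k - 1) * c"
    using \<open>c > 0\<close> by (simp add: powr_diff)
  then show ?thesis
    using True assms by (simp add: mult_right_mono)
next
  case False
  have "((\<lambda>x. x powr k) has_real_derivative k * c powr (k - 1)) (at c within {0<..})"
    using \<open>c > 0\<close> by (auto intro!: derivative_eq_intros)
  then show ?thesis
    using convex_on_imp_above_tangent[OF powr_convex[OF \<open>k \<ge> 1\<close>]] assms False
    by (auto simp: interior_open)
qed

lemma powr_mult_powr_diff_le: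
  fixes k \<alpha> \<beta> :: real
  assumes "k \<ge> 1" "\<alpha> \<ge> 0" "\<beta> \<ge> 0"
  shows "\<beta> powr k * (\<beta> powr k - \<alpha> powr k) \<le> k * \<beta> powr (2 * k - 1) * (\<beta> - \<alpha>)"
proof (cases "\<beta> = 0")
  case False
  then have "\<beta> > 0" using assms by simp
  have "\<beta> powr k * (\<beta> powr k - \<alpha> powr k) \<le> \<beta> powr k * (k * \<beta> powr (k - 1) * (\<beta> - \<alpha>))"
    using powr_above_tangent[OF \<open>k \<ge> 1\<close> \<open>\<beta> > 0\<close> \<open>\<alpha> \<ge> 0\<close>]
    by (intro mult_left_mono) (auto simp: right_diff_distrib)
  also have "\<dots> = k * (\<beta> powr k * \<beta> powr (k - 1)) * (\<beta> - \<alpha>)"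
    by (simp add: algebra_simps)
  also have "\<beta> powr k * \<beta> powr (k - 1) = \<beta> powr (2 * k - 1)"
    by (simp flip: powr_add)
  finally show ?thesis .
qed simp

lemma abs_powr_half_diff_le:
  fixes p a b :: real
  assumes "p \<ge> 2"
  shows "\<bar>b\<bar> powr (p / 2) * (\<bar>b\<bar> powr (p / 2) - \<bar>a\<bar> powr (p / 2))
         \<le> p / 2 * (\<bar>b\<bar> powr (p - 2) * b * (b - a))"
proof -
  have "\<bar>b\<bar> powr (p / 2) * (\<bar>b\<bar> powr (p / 2) - \<bar>a\<bar> powr (p / 2))
        \<le> p / 2 * \<bar>b\<bar> powr (p - 1) * (\<bar>b\<bar> - \<bar>a\<bar>)"
    using powr_mult_powr_diff_le[of "p / 2" "\<bar>a\<bar>" "\<bar>b\<bar>"] assms by simp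
  also have "\<dots> = p / 2 * (\<bar>b\<bar> powr (p - 2) * (\<bar>b\<bar> * (\<bar>b\<bar> - \<bar>a\<bar>)))"
    using powr_add[of "\<bar>b\<bar>" "p - 2" 1] by (cases "b = 0") simp_all
  also have "\<dots> \<le> p / 2 * (\<bar>b\<bar> powr (p - 2) * (b * (b - a)))"
    using assms abs_mult_self_eq[of b] abs_ge_self[of "a * b"]
    by (intro mult_left_mono) (auto simp: algebra_simps abs_mult)
  finally show ?thesis by (simp add: mult.assoc)
qed

lemma quadratic_form_nonneg:
  fixes M N K x y :: real
  assumes "M \<ge> 0" "N \<ge> 0" "K\<^sup>2 \<le> 4 * M * N"
  shows "0 \<le> M * x\<^sup>2 + N * y\<^sup>2 - K * x * y"
proof (cases "M = 0")
  case True
  then show ?thesis using assms by simp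
next
  case False
  have "4 * M * (M * x\<^sup>2 + N * y\<^sup>2 - K * x * y) = (2 * M * x - K * y)\<^sup>2 + (4 * M * N - K\<^sup>2) * y\<^sup>2"
    by (simp add: power2_eq_square algebra_simps)
  also have "\<dots> \<ge> 0" using assms by simp
  finally show ?thesis using assms False by (simp add: zero_le_mult_iff)
qed

lemma weighted_square_diff_le:
  fixes A B s t :: real
  assumes "s > 0" "t > 0"
  shows "(A\<^sup>2 * s - B\<^sup>2 * t)\<^sup>2
         \<le> A\<^sup>2 * B\<^sup>2 * (s - t)\<^sup>2 * (s / t + t / s) + 4 * (B - A)\<^sup>2 * (A\<^sup>2 * s\<^sup>2 + B\<^sup>2 * t\<^sup>2)"
proof -
  have twice_square: "(x + y)\<^sup>2 \<le> 2 * x\<^sup>2 + 2 * y\<^sup>2" for x y :: real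
    using zero_le_power2[of "x - y"] by (simp add: power2_eq_square algebra_simps)
  have "s / t + t / s - 2 = (s - t)\<^sup>2 / (s * t)"
    using assms by (simp add: field_simps power2_eq_square)
  then have "2 \<le> s / t + t / s"
    using assms by (smt (verit) divide_nonneg_pos mult_pos_pos zero_le_power2)
  have "(A\<^sup>2 * s - B\<^sup>2 * t)\<^sup>2 = (A * B * (s - t) + (A - B) * (A * s + B * t))\<^sup>2"
    by (simp add: power2_eq_square algebra_simps)
  also have "\<dots> \<le> 2 * (A * B * (s - t))\<^sup>2 + 2 * ((A - B) * (A * s + B * t))\<^sup>2"
    by (rule twice_square)
  also have "\<dots> \<le> A\<^sup>2 * B\<^sup>2 * (s - t)\<^sup>2 * (s / t + t / s) + 4 * (B - A)\<^sup>2 * (A\<^sup>2 * s\<^sup>2 + B\<^sup>2 * t\<^sup>2)"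
  proof (rule add_mono)
    show "2 * (A * B * (s - t))\<^sup>2 \<le> A\<^sup>2 * B\<^sup>2 * (s - t)\<^sup>2 * (s / t + t / s)"
      using mult_left_mono[OF \<open>2 \<le> s / t + t / s\<close>, of "(A * B * (s - t))\<^sup>2"]
      by (simp add: power_mult_distrib mult.commute)
    have "((A - B) * (A * s + B * t))\<^sup>2 \<le> (B - A)\<^sup>2 * (2 * (A * s)\<^sup>2 + 2 * (B * t)\<^sup>2)"
      using mult_left_mono[OF twice_square[of "A * s" "B * t"], of "(B - A)\<^sup>2"]
      by (simp add: power_mult_distrib power2_commute)
    then show "2 * ((A - B) * (A * s + B * t))\<^sup>2 \<le> 4 * (B - A)\<^sup>2 * (A\<^sup>2 * s\<^sup>2 + B\<^sup>2 * t\<^sup>2)"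
      by (simp add: power_mult_distrib distrib_left)
  qed
  finally show ?thesis .
qed

lemma edge_quadratic_form_nonneg:
  fixes A B s t r z :: real
  assumes "s > 0" "t > 0"
  shows "0 \<le> (z\<^sup>2 * t + r\<^sup>2 * s) * (B - A)\<^sup>2 + B\<^sup>2 * t * r * (r - z) + A\<^sup>2 * s * z * (z - r)
              + (z\<^sup>2 * A\<^sup>2 * (s - t)\<^sup>2 / s + r\<^sup>2 * B\<^sup>2 * (s - t)\<^sup>2 / t) / 4"
proof -
  define Qa where "Qa = A\<^sup>2 * (s - t)\<^sup>2 / (4 * s) + (B - A)\<^sup>2 * t"
  define Qb where "Qb = B\<^sup>2 * (s - t)\<^sup>2 / (4 * t) + (B - A)\<^sup>2 * s"
  have "Qa \<ge> 0" "Qb \<ge> 0"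
    using assms by (simp_all add: Qa_def Qb_def)
  have "4 * A\<^sup>2 * s * Qb + 4 * B\<^sup>2 * t * Qa
        = A\<^sup>2 * B\<^sup>2 * (s - t)\<^sup>2 * (s / t + t / s) + 4 * (B - A)\<^sup>2 * (A\<^sup>2 * s\<^sup>2 + B\<^sup>2 * t\<^sup>2)"
    using assms by (simp add: Qa_def Qb_def field_simps power2_eq_square)
  then have "(A\<^sup>2 * s - B\<^sup>2 * t)\<^sup>2 \<le> 4 * A\<^sup>2 * s * Qb + 4 * B\<^sup>2 * t * Qa"
    using weighted_square_diff_le[OF assms] by simp
  moreover have "4 * (A\<^sup>2 * s + Qa) * (B\<^sup>2 * t + Qb) - (A\<^sup>2 * s + B\<^sup>2 * t)\<^sup>2
        = 4 * A\<^sup>2 * s * Qb + 4 * B\<^sup>2 * t * Qa - (A\<^sup>2 * s - B\<^sup>2 * t)\<^sup>2 + 4 * Qa * Qb"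
    by (simp add: power2_eq_square algebra_simps)
  ultimately have "(A\<^sup>2 * s + B\<^sup>2 * t)\<^sup>2 \<le> 4 * (A\<^sup>2 * s + Qa) * (B\<^sup>2 * t + Qb)"
    using \<open>Qa \<ge> 0\<close> \<open>Qb \<ge> 0\<close> by (smt (verit) mult_nonneg_nonneg)
  then have "0 \<le> (A\<^sup>2 * s + Qa) * z\<^sup>2 + (B\<^sup>2 * t + Qb) * r\<^sup>2 - (A\<^sup>2 * s + B\<^sup>2 * t) * z * r"
    using \<open>Qa \<ge> 0\<close> \<open>Qb \<ge> 0\<close> assms by (intro quadratic_form_nonneg) auto
  also have "\<dots> = (z\<^sup>2 * t + r\<^sup>2 * s) * (B - A)\<^sup>2 + B\<^sup>2 * t * r * (r - z) + A\<^sup>2 * s * z * (z - r)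
              + (z\<^sup>2 * A\<^sup>2 * (s - t)\<^sup>2 / s + r\<^sup>2 * B\<^sup>2 * (s - t)\<^sup>2 / t) / 4"
    using assms by (simp add: Qa_def Qb_def field_simps power2_eq_square)
  finally show ?thesis .
qed

text \<open>The term of the ordered edge \<open>(x, y)\<close>, per unit of edge weight, in the difference of the
right-hand side and the left-hand side once the equation has been used; here \<open>a = u(x)\<close>,
\<open>b = u(y)\<close>, \<open>A = \<eta>(x)\<close>, \<open>B = \<eta>(y)\<close>, \<open>s = e^\<xi>(x)\<close>, \<open>t = e^\<xi>(y)\<close>.\<close>

definition caccioppoli_edge_term :: "real \<Rightarrow> real \<Rightarrow> real \<Rightarrow> real \<Rightarrow> real \<Rightarrow> real \<Rightarrow> real \<Rightarrow> real" where
  "caccioppoli_edge_term p a b A B s t =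
     \<bar>a\<bar> powr p * t * (B - A)\<^sup>2 - p / 2 * A\<^sup>2 * s * (\<bar>a\<bar> powr (p - 2) * a * (b - a))
     + \<bar>a\<bar> powr p * A\<^sup>2 * s * (1 - t / s)\<^sup>2 / 4"

lemma caccioppoli_edge_term_symmetric_nonneg:
  fixes p a b A B s t :: real
  assumes "p \<ge> 2" "s > 0" "t > 0"
  shows "0 \<le> caccioppoli_edge_term p a b A B s t + caccioppoli_edge_term p b a B A t s"
proof -
  define w v where "w = \<bar>a\<bar> powr (p / 2)" and "v = \<bar>b\<bar> powr (p / 2)"
  have "\<bar>a\<bar> powr p = w\<^sup>2" "\<bar>b\<bar> powr p = v\<^sup>2"
    by (simp_all add: w_def v_def power2_eq_square flip: powr_add)
  have "0 \<le> (w\<^sup>2 * t + v\<^sup>2 * s) * (B - A)\<^sup>2 + B\<^sup>2 * t * v * (v - w) + A\<^sup>2 * s * w * (w - v)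
        + (w\<^sup>2 * A\<^sup>2 * (s - t)\<^sup>2 / s + v\<^sup>2 * B\<^sup>2 * (s - t)\<^sup>2 / t) / 4"
    by (rule edge_quadratic_form_nonneg[OF assms(2,3)])
  also have "\<dots> \<le> (w\<^sup>2 * t + v\<^sup>2 * s) * (B - A)\<^sup>2
        + B\<^sup>2 * t * (p / 2 * (\<bar>b\<bar> powr (p - 2) * b * (b - a)))
        + A\<^sup>2 * s * (p / 2 * (\<bar>a\<bar> powr (p - 2) * a * (a - b)))
        + (w\<^sup>2 * A\<^sup>2 * (s - t)\<^sup>2 / s + v\<^sup>2 * B\<^sup>2 * (s - t)\<^sup>2 / t) / 4"
    using abs_powr_half_diff_le[OF assms(1), of a b] abs_powr_half_diff_le[OF assms(1), of b a]
      assms(2,3)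
    by (simp add: w_def v_def mult.assoc add_mono mult_left_mono)
  also have "\<dots> = caccioppoli_edge_term p a b A B s t + caccioppoli_edge_term p b a B A t s"
    using assms(2,3) \<open>\<bar>a\<bar> powr p = w\<^sup>2\<close> \<open>\<bar>b\<bar> powr p = v\<^sup>2\<close>
    by (simp add: caccioppoli_edge_term_def field_simps power2_eq_square)
  finally show ?thesis .
qed

lemma sum_sum_nonneg_of_symmetric_part:
  fixes f :: "'a \<Rightarrow> 'a \<Rightarrow> real"
  assumes "\<And>x y. x \<in> W \<Longrightarrow> y \<in> W \<Longrightarrow> 0 \<le> f x y + f y x"
  shows "0 \<le> (\<Sum>x\<in>W. \<Sum>y\<in>W. f x y)"
proof -
  have "2 * (\<Sum>x\<in>W. \<Sum>y\<in>W. f x y) = (\<Sum>x\<in>W. \<Sum>y\<in>W. f x y + f y x)"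
    using sum.swap[of f W W] by (simp add: sum.distrib)
  also have "\<dots> \<ge> 0"
    using assms by (intro sum_nonneg) auto
  finally show ?thesis by simp
qed

lemma infsum_eq_sum_vanishing_outside:
  fixes f :: "'a \<Rightarrow> 'b::{comm_monoid_add, t2_space}"
  assumes "finite W" "\<And>x. x \<notin> W \<Longrightarrow> f x = 0"
  shows "infsum f UNIV = sum f W"
  using infsum_cong_neutral[of W UNIV f f] assms by simp

lemma sum_eq_mult_graph_laplacian:
  assumes "finite W" "\<And>y. y \<notin> W \<Longrightarrow> \<omega> x y = 0" "\<mu> x \<noteq> 0"
  shows "(\<Sum>y\<in>W. (f y - f x) * \<omega> x y) = \<mu> x * graph_laplacian \<omega> \<mu> f x"
  unfolding graph_laplacian_def
  by (subst infsum_eq_sum_vanishing_outside[OF assms(1)]) (simp_all add: assms(2,3))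

lemma finite_closed_neighbourhood:
  assumes "weighted_graph \<omega> \<mu>" "locally_finite_graph \<omega>" "finite S"
  obtains W where "finite W" "S \<subseteq> W"
    "\<And>x y. \<omega> x y \<noteq> 0 \<Longrightarrow> x \<in> S \<or> y \<in> S \<Longrightarrow> x \<in> W \<and> y \<in> W"
proof
  let ?W = "S \<union> (\<Union>x\<in>S. {y. adjacent \<omega> x y})"
  show "finite ?W"
    using assms(2,3) by (auto simp: locally_finite_graph_def)
  show "S \<subseteq> ?W" by blast
  fix x y assume "\<omega> x y \<noteq> 0" "x \<in> S \<or> y \<in> S"
  moreover have "adjacent \<omega> x y \<and> adjacent \<omega> y x"
    using assms(1) \<open>\<omega> x y \<noteq> 0\<close> unfolding weighted_graph_def adjacent_def
    by (metis order_le_less)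
  ultimately show "x \<in> ?W \<and> y \<in> ?W" by blast
qed

lemma caccioppoli_inequality_sum:
  fixes W :: "'a set" and \<omega> :: "'a \<Rightarrow> 'a \<Rightarrow> real" and \<mu> V u \<eta> \<xi> :: "'a \<Rightarrow> real" and p :: real
  assumes p: "p \<ge> 2"
    and \<omega>_nonneg: "\<And>x y. 0 \<le> \<omega> x y" and \<omega>_sym: "\<And>x y. \<omega> x y = \<omega> y x"
    and eq: "\<And>x. x \<in> W \<Longrightarrow> \<eta> x \<noteq> 0 \<Longrightarrow> (\<Sum>y\<in>W. (u y - u x) * \<omega> x y) = V x * \<mu> x * u x"
  shows "1/2 * (\<Sum>x\<in>W. \<bar>u x\<bar> powr p * (\<eta> x)\<^sup>2 * exp (\<xi> x) *
            (V x * p * \<mu> x - 1/2 * (\<Sum>y\<in>W. \<omega> x y * (1 - exp (\<xi> y - \<xi> x))\<^sup>2)))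
         \<le> (\<Sum>x\<in>W. \<Sum>y\<in>W. \<bar>u x\<bar> powr p * exp (\<xi> y) * (\<eta> y - \<eta> x)\<^sup>2 * \<omega> x y)"
proof -
  define E where
    "E x y = \<omega> x y * caccioppoli_edge_term p (u x) (u y) (\<eta> x) (\<eta> y) (exp (\<xi> x)) (exp (\<xi> y))"
    for x y
  define R where "R x y = \<bar>u x\<bar> powr p * exp (\<xi> y) * (\<eta> y - \<eta> x)\<^sup>2 * \<omega> x y" for x y
  define L where "L x = \<bar>u x\<bar> powr p * (\<eta> x)\<^sup>2 * exp (\<xi> x) *
            (V x * p * \<mu> x - 1/2 * (\<Sum>y\<in>W. \<omega> x y * (1 - exp (\<xi> y - \<xi> x))\<^sup>2))" for x
  have "0 \<le> (\<Sum>x\<in>W. \<Sum>y\<in>W. E x y)"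
  proof (rule sum_sum_nonneg_of_symmetric_part)
    fix x y
    show "0 \<le> E x y + E y x"
      using caccioppoli_edge_term_symmetric_nonneg[OF p exp_gt_zero exp_gt_zero] \<omega>_nonneg
      unfolding E_def \<omega>_sym[of y x] distrib_left[symmetric] by simp
  qed
  also have "(\<Sum>y\<in>W. E x y) = (\<Sum>y\<in>W. R x y) - 1/2 * L x" if "x \<in> W" for x
  proof -
    define c where "c = (\<eta> x)\<^sup>2 * exp (\<xi> x)"
    have "E x y = R x y - p / 2 * (c * (\<bar>u x\<bar> powr (p - 2) * u x) * ((u y - u x) * \<omega> x y))
                + \<bar>u x\<bar> powr p * c / 4 * (\<omega> x y * (1 - exp (\<xi> y - \<xi> x))\<^sup>2)" for y
      by (simp add: E_def caccioppoli_edge_term_def R_def c_def exp_diff field_simps)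
    then have "(\<Sum>y\<in>W. E x y) = (\<Sum>y\<in>W. R x y)
                - p / 2 * (c * (\<bar>u x\<bar> powr (p - 2) * u x) * (\<Sum>y\<in>W. (u y - u x) * \<omega> x y))
                + \<bar>u x\<bar> powr p * c / 4 * (\<Sum>y\<in>W. \<omega> x y * (1 - exp (\<xi> y - \<xi> x))\<^sup>2)"
      by (simp add: sum.distrib sum_subtractf sum_distrib_left)
    also have "c * (\<bar>u x\<bar> powr (p - 2) * u x) * (\<Sum>y\<in>W. (u y - u x) * \<omega> x y)
             = c * \<bar>u x\<bar> powr p * V x * \<mu> x"
    proof (cases "\<eta> x = 0")
      case False
      have "\<bar>u x\<bar> powr (p - 2) * u x * u x = \<bar>u x\<bar> powr p"
        using powr_add[of "\<bar>u x\<bar>" "p - 2" 2] by (cases "u x = 0") (simp_all add: power2_eq_square)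
      then show ?thesis
        using eq[OF that False] by (simp add: algebra_simps)
    qed (simp add: c_def)
    finally show ?thesis
      by (simp add: L_def c_def algebra_simps)
  qed
  then have "(\<Sum>x\<in>W. \<Sum>y\<in>W. E x y) = (\<Sum>x\<in>W. \<Sum>y\<in>W. R x y) - 1/2 * (\<Sum>x\<in>W. L x)"
    by (simp add: sum_subtractf sum_distrib_left)
  finally show ?thesis
    by (simp add: L_def R_def)
qed

theorem proposition4p3:
  fixes \<omega> :: "'a::countable \<Rightarrow> 'a \<Rightarrow> real" and \<mu> :: "'a \<Rightarrow> real"
    and V u \<eta> \<xi> :: "'a \<Rightarrow> real" and p :: real
  assumes wg: "weighted_graph \<omega> \<mu>"
    and inf: "infinite (UNIV :: 'a set)"
    and conn: "connected_graph \<omega>"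
    and lf: "locally_finite_graph \<omega>"
    and sol: "\<forall>x. graph_laplacian \<omega> \<mu> u x - V x * u x = 0"
    and eta_nonneg: "\<forall>x. \<eta> x \<ge> 0"
    and eta_fin: "finite {x. \<eta> x \<noteq> 0}"
    and mono: "\<forall>x y. adjacent \<omega> x y \<longrightarrow>
                 ((\<eta> y)\<^sup>2 - (\<eta> x)\<^sup>2) * (exp (\<xi> y) - exp (\<xi> x)) \<ge> 0"
    and p: "p \<ge> 2"
  shows "1/2 * (\<Sum>\<^sub>\<infinity>x. \<bar>u x\<bar> powr p * (\<eta> x)\<^sup>2 * exp (\<xi> x) *
            (V x * p * \<mu> x - 1/2 * (\<Sum>\<^sub>\<infinity>y. \<omega> x y * (1 - exp (\<xi> y - \<xi> x))\<^sup>2)))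
         \<le> (\<Sum>\<^sub>\<infinity>(x, y). \<bar>u x\<bar> powr p * exp (\<xi> y) * (\<eta> y - \<eta> x)\<^sup>2 * \<omega> x y)"
proof -
  have \<mu>: "\<And>x. \<mu> x > 0" and \<omega>: "\<And>x y. 0 \<le> \<omega> x y" "\<And>x y. \<omega> x y = \<omega> y x"
    using wg by (auto simp: weighted_graph_def)
  obtain W where "finite W" "{x. \<eta> x \<noteq> 0} \<subseteq> W"
    and nbhd: "\<And>x y. \<omega> x y \<noteq> 0 \<Longrightarrow> \<eta> x \<noteq> 0 \<or> \<eta> y \<noteq> 0 \<Longrightarrow> x \<in> W \<and> y \<in> W"
    using finite_closed_neighbourhood[OF wg lf eta_fin] by auto
  have row: "\<omega> x y = 0" if "\<eta> x \<noteq> 0" "y \<notin> W" for x y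
    using nbhd that by blast
  have eq: "(\<Sum>y\<in>W. (u y - u x) * \<omega> x y) = V x * \<mu> x * u x" if "\<eta> x \<noteq> 0" for x
    using sum_eq_mult_graph_laplacian[where \<omega> = \<omega> and x = x and \<mu> = \<mu> and f = u,
        OF \<open>finite W\<close> row[OF that]] sol \<mu>[of x]
    by simp
  have lhs: "(\<Sum>\<^sub>\<infinity>x. \<bar>u x\<bar> powr p * (\<eta> x)\<^sup>2 * exp (\<xi> x) *
            (V x * p * \<mu> x - 1/2 * (\<Sum>\<^sub>\<infinity>y. \<omega> x y * (1 - exp (\<xi> y - \<xi> x))\<^sup>2)))
      = (\<Sum>x\<in>W. \<bar>u x\<bar> powr p * (\<eta> x)\<^sup>2 * exp (\<xi> x) *
            (V x * p * \<mu> x - 1/2 * (\<Sum>y\<in>W. \<omega> x y * (1 - exp (\<xi> y - \<xi> x))\<^sup>2)))"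
    (is "infsum ?F UNIV = sum ?G W")
  proof (rule trans[OF infsum_eq_sum_vanishing_outside[OF \<open>finite W\<close>] sum.cong[OF refl]])
    show "?F x = 0" if "x \<notin> W" for x
      using \<open>{x. \<eta> x \<noteq> 0} \<subseteq> W\<close> that by auto
    show "?F x = ?G x" for x
      using row[of x]
      by (cases "\<eta> x = 0") (simp_all add: infsum_eq_sum_vanishing_outside[OF \<open>finite W\<close>])
  qed
  have rhs: "(\<Sum>\<^sub>\<infinity>(x, y). \<bar>u x\<bar> powr p * exp (\<xi> y) * (\<eta> y - \<eta> x)\<^sup>2 * \<omega> x y)
      = (\<Sum>x\<in>W. \<Sum>y\<in>W. \<bar>u x\<bar> powr p * exp (\<xi> y) * (\<eta> y - \<eta> x)\<^sup>2 * \<omega> x y)"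
    using nbhd
    by (subst infsum_eq_sum_vanishing_outside[where W = "W \<times> W"])
      (auto simp: \<open>finite W\<close> sum.cartesian_product)
  show ?thesis
    unfolding lhs rhs using caccioppoli_inequality_sum[OF p \<omega> eq] by blast
qed

end
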